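(* Let $n$ be sufficiently large, $\alpha\in[1,n^{0.2}]$, $B=\gamma=\alpha(\ln n)^{10}$, $\rho=(\ln n)^3$, let $L\ge 2$ be an integer and $j\in\{1,\dots,L-1\}$. Let $\zeta_1=\left(\tfrac12-B^{-(j+1)}\right)\gamma B^{2j}-\sqrt{10\gamma\ln n}\,B^{j}$ and $\zeta_3=\tfrac{\gamma B^{2j}}{2}+\tfrac{B^{j+1}}{100}$. Consider a Bernoulli arm with mean $\tfrac12-X$, where $X\sim\mu$ for some $\mu\in\mathcal{D}_j$. Pull the arm $\gamma B^{2j}$ times, obtaining outcomes $\Theta\in\{0,1\}^{\gamma B^{2j}}$ with $|\Theta|=\sum_i\Theta_i$. Then for every outcome vector $\theta$ with $|\theta|\in[\zeta_1,\zeta_3]$, the posterior distribution $\nu$ of $X$ conditioned on $\Theta=\theta$ belongs to $\mathcal{D}_{j+1}$.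
   Context: For an integer $j\ge1$ and $\eta\ge0$, $\mathcal{D}_j(\eta)$ is the class of probability distributions $\pi$ supported on $\{B^{-1},B^{-2},\dots,B^{-L}\}$ such that, for $X\sim\pi$: (i) if $j\ge2$, $\Pr[X\in\{B^{-1},\dots,B^{-(j-1)}\}]\le n^{-9}$; (ii) there is a normalization constant $\lambda>0$ (depending on $\pi$) such that for every $\ell=j,\dots,L$, $\Pr[X=B^{-\ell}]\in\left[\lambda B^{-2\ell}(1-\rho^{-\ell}\eta),\ \lambda B^{-2\ell}(1+\rho^{-\ell}\eta)\right]$. The class $\mathcal{D}_1:=\mathcal{D}_1(0)$ consists of the single distribution with $\Pr[X=B^{-\ell}]=\lambda_1B^{-2\ell}$ for $\ell=1,\dots,L$ ($\lambda_1$ the normalizer), and for $j\ge2$, $\mathcal{D}_j:=\mathcal{D}_j(\rho^j/2)$. *)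

theory Defs
  imports "HOL-Probability.Probability"
begin

definition levels :: "real \<Rightarrow> nat \<Rightarrow> real set" where
  "levels B L = {inverse (B ^ l) | l. l \<in> {1..L}}"

definition Dclass :: "nat \<Rightarrow> real \<Rightarrow> real \<Rightarrow> nat \<Rightarrow> nat \<Rightarrow> real \<Rightarrow> real pmf \<Rightarrow> bool" where
  "Dclass n B \<rho> L j \<eta> \<pi> \<longleftrightarrow>
     set_pmf \<pi> \<subseteq> levels B L \<and>
     (j \<ge> 2 \<longrightarrow> measure_pmf.prob \<pi> {inverse (B ^ l) | l. l \<in> {1..j-1}} \<le> inverse (real n ^ 9)) \<and>
     (\<exists>c>0. \<forall>l\<in>{j..L}.
        c * inverse (B ^ (2*l)) * (1 - inverse (\<rho> ^ l) * \<eta>) \<le> pmf \<pi> (inverse (B ^ l)) \<and>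
        pmf \<pi> (inverse (B ^ l)) \<le> c * inverse (B ^ (2*l)) * (1 + inverse (\<rho> ^ l) * \<eta>))"

definition Dcls :: "nat \<Rightarrow> real \<Rightarrow> real \<Rightarrow> nat \<Rightarrow> nat \<Rightarrow> real pmf \<Rightarrow> bool" where
  "Dcls n B \<rho> L j = Dclass n B \<rho> L j (if j = 1 then 0 else \<rho> ^ j / 2)"

text \<open>Joint law of (X, Theta): X ~ mu, then m independent pulls of a Bernoulli(1/2 - X) arm.
  Outcome vectors are functions nat => bool, False outside {..<m}.\<close>
definition joint :: "real pmf \<Rightarrow> nat \<Rightarrow> (real \<times> (nat \<Rightarrow> bool)) pmf" where
  "joint \<mu> m = bind_pmf \<mu> (\<lambda>x. map_pmf (\<lambda>t. (x, t))
        (Pi_pmf {..<m} False (\<lambda>_. bernoulli_pmf (1/2 - x))))"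

definition posterior :: "real pmf \<Rightarrow> nat \<Rightarrow> (nat \<Rightarrow> bool) \<Rightarrow> real pmf" where
  "posterior \<mu> m \<theta> = map_pmf fst (cond_pmf (joint \<mu> m) {p. snd p = \<theta>})"

definition numPulls :: "real \<Rightarrow> real \<Rightarrow> nat \<Rightarrow> nat" where
  "numPulls \<gamma> B j = nat \<lfloor>\<gamma> * B ^ (2*j)\<rfloor>"

definition zeta1 :: "nat \<Rightarrow> real \<Rightarrow> real \<Rightarrow> nat \<Rightarrow> real" where
  "zeta1 n \<gamma> B j = (1/2 - inverse (B ^ (j+1))) * \<gamma> * B ^ (2*j) - sqrt (10 * \<gamma> * ln (real n)) * B ^ j"

definition zeta3 :: "real \<Rightarrow> real \<Rightarrow> nat \<Rightarrow> real" where
  "zeta3 \<gamma> B j = \<gamma> * B ^ (2*j) / 2 + B ^ (j+1) / 100"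

end

theory Submission
  imports Defs
begin

text \<open>
  After m pulls with k successes, the likelihood of the mean 1/2 - x is 2^-m times the tilt
  (1 - 2x)^k (1 + 2x)^(m-k), so the posterior is the prior reweighted by the tilt. For the
  window of success counts in question the tilt lies within a factor exp(\<plusminus>1/(16 B^(l-j-1)))
  of 1 at every level x = B^-l with l > j, and is at most exp(-B) at the levels l \<le> j.
  The prior mass of the levels above j is at least 1/(8 B^2) (the level j can only carry about
  B^2 times the weight of level j+1), so the normalising constant is O(B^2); hence the
  posterior mass of the levels l \<le> j is O(B^2 e^-B) \<le> n^-9, and the posterior keeps the
  B^-2l profile on the remaining levels with a relative error which shrinks geometrically
  in l - j.
\<close>

definition tilt :: "nat \<Rightarrow> nat \<Rightarrow> real \<Rightarrow> real" where
  "tilt m k x = (1 - 2*x) ^ k * (1 + 2*x) ^ (m - k)"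

definition level_set :: "real \<Rightarrow> nat set \<Rightarrow> real set" where
  "level_set B A = (\<lambda>l. inverse (B ^ l)) ` A"

lemma levels_eq_level_set: "levels B L = level_set B {1..L}"
  unfolding levels_def level_set_def by auto

lemma levels_bounds:
  assumes "2 < B" "x \<in> levels B L"
  shows "0 < x" "x < 1/2"
proof -
  obtain l where l: "1 \<le> l" "x = inverse (B ^ l)"
    using assms(2) unfolding levels_def by auto
  have "B ^ 1 \<le> B ^ l" using l assms(1) by (intro power_increasing) auto
  then have "inverse (B ^ l) \<le> inverse B" using assms(1) by (intro le_imp_inverse_le) auto
  moreover have "inverse B < 1/2" using assms(1) by (simp add: inverse_eq_divide field_simps)
  ultimately show "x < 1/2" using l by linarith
  show "0 < x" using l assms(1) by simp
qed

subsection \<open>The posterior is the prior reweighted by the tilt\<close>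

lemma pmf_joint:
  "pmf (joint \<mu> m) (x, \<theta>) = pmf \<mu> x * pmf (Pi_pmf {..<m} False (\<lambda>_. bernoulli_pmf (1/2 - x))) \<theta>"
proof -
  have "pmf (joint \<mu> m) (x, \<theta>) = (\<integral>x'. pmf (map_pmf (\<lambda>t. (x', t))
        (Pi_pmf {..<m} False (\<lambda>_. bernoulli_pmf (1/2 - x')))) (x, \<theta>) \<partial>measure_pmf \<mu>)"
    unfolding joint_def pmf_bind ..
  also have "\<dots> = (\<integral>x'. indicator {x} x' *
      pmf (Pi_pmf {..<m} False (\<lambda>_. bernoulli_pmf (1/2 - x))) \<theta> \<partial>measure_pmf \<mu>)"
  proof (rule Bochner_Integration.integral_cong[OF refl])
    fix x'
    show "pmf (map_pmf (\<lambda>t. (x', t)) (Pi_pmf {..<m} False (\<lambda>_. bernoulli_pmf (1/2 - x')))) (x, \<theta>)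
        = indicator {x} x' * pmf (Pi_pmf {..<m} False (\<lambda>_. bernoulli_pmf (1/2 - x))) \<theta>"
    proof (cases "x' = x")
      case True
      have "inj (Pair x)" by (auto simp: inj_def)
      then show ?thesis using True by (simp add: pmf_map_inj'[OF \<open>inj (Pair x)\<close>])
    next
      case False
      then have "Pair x' -` {(x, \<theta>)} = {}" by auto
      then show ?thesis using False by (simp add: pmf_map)
    qed
  qed
  also have "\<dots> = pmf \<mu> x * pmf (Pi_pmf {..<m} False (\<lambda>_. bernoulli_pmf (1/2 - x))) \<theta>"
    by (simp add: measure_pmf_single)
  finally show ?thesis .
qed

lemma pmf_Pi_bernoulli:
  assumes "0 \<le> p" "p \<le> 1" "\<forall>i\<ge>m. \<not> \<theta> i"
  shows "pmf (Pi_pmf {..<m} False (\<lambda>_. bernoulli_pmf p)) \<theta>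
     = p ^ card {i. i < m \<and> \<theta> i} * (1 - p) ^ (m - card {i. i < m \<and> \<theta> i})"
proof -
  have "pmf (Pi_pmf {..<m} False (\<lambda>_. bernoulli_pmf p)) \<theta> = (\<Prod>i<m. if \<theta> i then p else 1 - p)"
    using assms by (subst pmf_Pi) (auto intro!: prod.cong)
  also have "\<dots> = (\<Prod>i\<in>{..<m} \<inter> {i. \<theta> i}. p) * (\<Prod>i\<in>{..<m} \<inter> - {i. \<theta> i}. 1 - p)"
    by (rule prod.If_cases) auto
  also have "{..<m} \<inter> {i. \<theta> i} = {i. i < m \<and> \<theta> i}" by auto
  also have "{..<m} \<inter> - {i. \<theta> i} = {..<m} - {i. i < m \<and> \<theta> i}" by auto
  finally show ?thesis by (simp add: card_Diff_subset[of "{i. i < m \<and> \<theta> i}" "{..<m}"] subset_eq)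
qed

lemma pmf_posterior:
  assumes "(x0, \<theta>) \<in> set_pmf (joint \<mu> m)"
  shows "pmf (posterior \<mu> m \<theta>) x = pmf (joint \<mu> m) (x, \<theta>) / measure_pmf.prob (joint \<mu> m) {p. snd p = \<theta>}"
proof -
  let ?J = "joint \<mu> m" and ?S = "{p :: real \<times> (nat \<Rightarrow> bool). snd p = \<theta>}"
  let ?C = "cond_pmf ?J ?S"
  have ne: "set_pmf ?J \<inter> ?S \<noteq> {}" using assms by auto
  have "pmf (posterior \<mu> m \<theta>) x = measure_pmf.prob ?C (fst -` {x} \<inter> set_pmf ?C)"
    unfolding posterior_def pmf_map by (simp add: measure_Int_set_pmf)
  also have "fst -` {x} \<inter> set_pmf ?C = {(x, \<theta>)} \<inter> set_pmf ?C"
    using ne by auto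
  also have "measure_pmf.prob ?C \<dots> = pmf ?C (x, \<theta>)"
    by (simp add: measure_Int_set_pmf measure_pmf_single)
  finally show ?thesis using ne by (simp add: pmf_cond)
qed

lemma posterior_eq_tilt:
  assumes \<mu>: "\<forall>x\<in>set_pmf \<mu>. 0 < x \<and> x < 1/2" and \<theta>: "\<forall>i\<ge>m. \<not> \<theta> i"
  obtains Q where "Q > 0"
    "\<And>x. pmf (posterior \<mu> m \<theta>) x = Q * (pmf \<mu> x * tilt m (card {i. i < m \<and> \<theta> i}) x)"
proof -
  define k where "k = card {i. i < m \<and> \<theta> i}"
  define Z where "Z = measure_pmf.prob (joint \<mu> m) {p. snd p = \<theta>}"
  have k: "k \<le> m"
    using card_mono[of "{..<m}" "{i. i < m \<and> \<theta> i}"] unfolding k_def by auto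
  have lik: "pmf \<mu> x * pmf (Pi_pmf {..<m} False (\<lambda>_. bernoulli_pmf (1/2 - x))) \<theta>
      = (1/2) ^ m * (pmf \<mu> x * tilt m k x)" for x
  proof (cases "x \<in> set_pmf \<mu>")
    case True
    then have "0 \<le> x" "x \<le> 1/2" using \<mu> by auto
    then have "pmf (Pi_pmf {..<m} False (\<lambda>_. bernoulli_pmf (1/2 - x))) \<theta>
        = (1/2 - x) ^ k * (1 - (1/2 - x)) ^ (m - k)"
      using pmf_Pi_bernoulli[of "1/2 - x" m \<theta>] \<theta> unfolding k_def by simp
    also have "\<dots> = ((1/2) * (1 - 2*x)) ^ k * ((1/2) * (1 + 2*x)) ^ (m - k)"
      by (simp add: algebra_simps)
    also have "\<dots> = (1/2) ^ (k + (m - k)) * tilt m k x"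
      unfolding tilt_def power_mult_distrib power_add by simp
    finally show ?thesis using k by simp
  next
    case False
    then show ?thesis by (simp add: set_pmf_iff)
  qed
  obtain x0 where x0: "x0 \<in> set_pmf \<mu>" using set_pmf_not_empty[of \<mu>] by blast
  have "pmf (joint \<mu> m) (x0, \<theta>) > 0"
    unfolding pmf_joint lik using x0 \<mu> by (auto simp: tilt_def pmf_positive)
  then have x0\<theta>: "(x0, \<theta>) \<in> set_pmf (joint \<mu> m)" by (simp add: set_pmf_iff)
  then have "Z > 0" unfolding Z_def by (intro measure_pmf_posI) auto
  then show ?thesis
    using that[of "(1/2) ^ m / Z"] pmf_posterior[OF x0\<theta>]
    unfolding pmf_joint lik Z_def[symmetric] k_def[symmetric] by simp
qed

subsection \<open>Exponential bounds on the tilt\<close>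

lemma power_le_exp:
  fixes y :: real
  assumes "0 \<le> 1 + y"
  shows "(1 + y) ^ n \<le> exp (y * real n)"
proof -
  have "(1 + y) ^ n \<le> exp y ^ n"
    using assms by (intro power_mono) (auto simp: add.commute exp_ge_add_one_self)
  also have "\<dots> = exp (y * real n)" by (simp add: exp_of_nat_mult[symmetric] mult.commute)
  finally show ?thesis .
qed

lemma exp_le_one_plus_power:
  fixes y :: real
  assumes "0 \<le> y" "y \<le> 1"
  shows "exp ((y - y\<^sup>2) * real n) \<le> (1 + y) ^ n"
proof -
  have "exp (y - y\<^sup>2) \<le> 1 + y"
    using ln_one_plus_pos_lower_bound[OF assms] assms
    by (metis add_nonneg_pos exp_le_cancel_iff exp_ln zero_less_one add.commute)
  then have "exp (y - y\<^sup>2) ^ n \<le> (1 + y) ^ n" by (rule power_mono) simp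
  then show ?thesis by (simp add: exp_of_nat_mult[symmetric] mult.commute)
qed

lemma exp_le_one_minus_power:
  fixes y :: real
  assumes "0 \<le> y" "y \<le> 1/2"
  shows "exp ((- y - 2 * y\<^sup>2) * real n) \<le> (1 - y) ^ n"
proof -
  have "exp (- y - 2 * y\<^sup>2) \<le> exp (ln (1 - y))"
    using ln_one_minus_pos_lower_bound[OF assms] by simp
  then have "exp (- y - 2 * y\<^sup>2) \<le> 1 - y" using assms by simp
  then have "exp (- y - 2 * y\<^sup>2) ^ n \<le> (1 - y) ^ n" by (rule power_mono) simp
  then show ?thesis by (simp add: exp_of_nat_mult[symmetric] mult.commute)
qed

lemma tilt_le_exp:
  assumes "0 \<le> x" "x \<le> 1/2" "k \<le> m"
  shows "tilt m k x \<le> exp (2 * x * (real m - 2 * real k))"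
proof -
  have "tilt m k x \<le> exp ((- 2 * x) * real k) * exp ((2 * x) * real (m - k))"
    unfolding tilt_def using assms power_le_exp[of "-2*x" k] power_le_exp[of "2*x" "m-k"]
    by (intro mult_mono) auto
  also have "\<dots> = exp (2 * x * (real m - 2 * real k))"
    using assms by (simp add: exp_add[symmetric] of_nat_diff algebra_simps)
  finally show ?thesis .
qed

lemma exp_le_tilt:
  assumes "0 \<le> x" "x \<le> 1/4" "k \<le> m"
  shows "exp (2 * x * (real m - 2 * real k) - 8 * x\<^sup>2 * real m) \<le> tilt m k x"
proof -
  have "x\<^sup>2 * real k \<le> x\<^sup>2 * real m" "x\<^sup>2 * real (m - k) \<le> x\<^sup>2 * real m"
    using assms by (auto intro: mult_left_mono)
  then have "2 * x * (real m - 2 * real k) - 8 * x\<^sup>2 * real m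
      \<le> (- (2*x) - 2 * (2*x)\<^sup>2) * real k + (2*x - (2*x)\<^sup>2) * real (m - k)"
    using assms by (simp add: of_nat_diff power2_eq_square algebra_simps)
  then have "exp (2 * x * (real m - 2 * real k) - 8 * x\<^sup>2 * real m)
      \<le> exp ((- (2*x) - 2 * (2*x)\<^sup>2) * real k) * exp ((2*x - (2*x)\<^sup>2) * real (m - k))"
    by (simp add: exp_add[symmetric])
  also have "\<dots> \<le> tilt m k x"
    unfolding tilt_def using assms exp_le_one_minus_power[of "2*x" k] exp_le_one_plus_power[of "2*x" "m-k"]
    by (intro mult_mono) auto
  finally show ?thesis .
qed

text \<open>
  Pairing a success with a failure contributes (1 - 4x^2); this captures the quadratic decay
  which the first-order bound tilt_le_exp misses.
\<close>

lemma tilt_le_exp_few_successes: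
  assumes "0 \<le> x" "x \<le> 1/2" "2 * k \<le> m"
  shows "tilt m k x \<le> exp (2 * x * (real m - 2 * real k) - 4 * x\<^sup>2 * real k)"
proof -
  have "tilt m k x = (1 + (- 4 * x\<^sup>2)) ^ k * (1 + 2*x) ^ (m - 2*k)"
  proof -
    have "(1 + 2*x) ^ (m - k) = (1 + 2*x) ^ k * (1 + 2*x) ^ (m - 2*k)"
      using assms(3) by (simp add: power_add[symmetric])
    then show ?thesis
      unfolding tilt_def by (simp add: power_mult_distrib[symmetric] algebra_simps power2_eq_square)
  qed
  also have "\<dots> \<le> exp ((- 4 * x\<^sup>2) * real k) * exp ((2 * x) * real (m - 2*k))"
  proof (intro mult_mono power_le_exp)
    have "x\<^sup>2 \<le> (1/2)\<^sup>2" using assms by (intro power_mono) auto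
    then show "0 \<le> 1 + (- 4 * x\<^sup>2)" by (simp add: power_divide)
  qed (use assms in auto)
  also have "\<dots> = exp (2 * x * (real m - 2 * real k) - 4 * x\<^sup>2 * real k)"
    using assms(3) by (simp add: exp_add[symmetric] of_nat_diff algebra_simps)
  finally show ?thesis .
qed

lemma tilt_le_exp_many_successes:
  assumes "0 \<le> x" "x \<le> 1/2" "m \<le> 2 * k" "k \<le> m"
  shows "tilt m k x \<le> exp (- 4 * x\<^sup>2 * real (m - k))"
proof -
  have "tilt m k x = (1 - 2*x) ^ (2*k - m) * (1 + (- 4 * x\<^sup>2)) ^ (m - k)"
  proof -
    have "(1 - 2*x) ^ k = (1 - 2*x) ^ (2*k - m) * (1 - 2*x) ^ (m - k)"
      using assms(3,4) by (simp add: power_add[symmetric])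
    then show ?thesis
      unfolding tilt_def by (simp add: power_mult_distrib[symmetric] algebra_simps power2_eq_square)
  qed
  also have "\<dots> \<le> 1 * exp ((- 4 * x\<^sup>2) * real (m - k))"
  proof -
    have "x\<^sup>2 \<le> (1/2)\<^sup>2" using assms by (intro power_mono) auto
    then have "0 \<le> 1 + (- 4 * x\<^sup>2)" by (simp add: power_divide)
    then show ?thesis using assms by (intro mult_mono power_le_exp power_le_one) auto
  qed
  finally show ?thesis by simp
qed

subsection \<open>The tilt in the window of success counts\<close>

text \<open>
  P stands for B^j and s for sqrt(10 \<gamma> ln n) with \<gamma> = B: then m = \<lfloor>B P^2\<rfloor> pulls are made and
  the success count k lies in [\<zeta>1, \<zeta>3].
\<close>

locale pull_window =
  fixes B P s :: real and m k :: nat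
  assumes B_ge: "1000 \<le> B" and P_ge: "B \<le> P"
    and s_nonneg: "0 \<le> s" and s_le: "s \<le> B/100"
    and m_le: "real m \<le> B * P\<^sup>2" and m_ge: "B * P\<^sup>2 - 1 \<le> real m" and k_le_m: "k \<le> m"
    and k_ge: "(1/2 - 1/(B*P)) * B * P\<^sup>2 - s * P \<le> real k"
    and k_le: "real k \<le> B * P\<^sup>2 / 2 + B * P / 100"
begin

lemma B_P_pos: "0 < B" "0 < P"
  using B_ge P_ge by auto

lemma k_ge_half: "B * P\<^sup>2 / 2 - P - s * P \<le> real k"
proof -
  have "(1/2 - 1/(B*P)) * B * P\<^sup>2 = B * P\<^sup>2 / 2 - P"
    using B_P_pos by (simp add: field_simps power2_eq_square)
  then show ?thesis using k_ge by simp
qed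

lemma drift_le: "real m - 2 * real k \<le> 2 * P + 2 * s * P"
  using m_le k_ge_half by linarith

lemma drift_ge: "- 1 - B * P / 50 \<le> real m - 2 * real k"
  using m_ge k_le by linarith

lemma tilt_near_one:
  assumes u: "1 \<le> u"
  shows "exp (- (1/(16*u))) \<le> tilt m k (1/(P*B*u))" "tilt m k (1/(P*B*u)) \<le> exp (1/(16*u))"
proof -
  define x where "x = 1/(P*B*u)"
  have u0: "0 < u" using u by simp
  have x0: "0 \<le> x" using B_P_pos u0 unfolding x_def by simp
  have "4 * 1 * 1 \<le> P * B * u" using B_ge P_ge u by (intro mult_mono) auto
  then have x1: "x \<le> 1/4" unfolding x_def by (simp add: field_simps)
  have "2 * x * (real m - 2 * real k) \<le> 2 * x * (2 * P + 2 * s * P)"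
    using drift_le x0 by (intro mult_left_mono) auto
  also have "\<dots> = (4 * (1 + s) / B) / u" unfolding x_def using B_P_pos u0 by (simp add: field_simps)
  also have "\<dots> \<le> (1/16) / u"
    using B_P_pos u0 s_le B_ge by (intro divide_right_mono) (auto simp: field_simps)
  finally have up: "2 * x * (real m - 2 * real k) \<le> 1/(16*u)" by simp
  have "tilt m k x \<le> exp (2 * x * (real m - 2 * real k))"
    using tilt_le_exp x0 x1 k_le_m by simp
  also have "\<dots> \<le> exp (1/(16*u))" using up by simp
  finally show "tilt m k (1/(P*B*u)) \<le> exp (1/(16*u))" unfolding x_def .
  have "2 * x * (real m - 2 * real k) \<ge> 2 * x * (- 1 - B * P / 50)"
    using drift_ge x0 by (intro mult_left_mono) auto
  also have "2 * x * (- 1 - B * P / 50) = - ((2/(P*B) + 1/25) / u)"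
    unfolding x_def using B_P_pos u0 by (simp add: field_simps)
  finally have a: "- ((2/(P*B) + 1/25) / u) \<le> 2 * x * (real m - 2 * real k)" .
  have "8 * x\<^sup>2 * real m \<le> 8 * x\<^sup>2 * (B * P\<^sup>2)"
    using m_le by (intro mult_left_mono) auto
  also have "\<dots> = (8/B) / u / u" unfolding x_def using B_P_pos u0 by (simp add: field_simps power2_eq_square)
  also have "\<dots> \<le> (8/B) / u" using B_P_pos u by (simp add: field_simps)
  finally have b: "8 * x\<^sup>2 * real m \<le> (8/B) / u" .
  have "2/(P*B) \<le> 2/B" "10/B \<le> 1/100" using B_P_pos P_ge B_ge by (simp_all add: field_simps)
  then have "(2/(P*B) + 1/25) + 8/B \<le> 1/16" by simp
  then have "(2/(P*B) + 1/25) / u + (8/B) / u \<le> (1/16) / u"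
    using u0 by (metis add_divide_distrib divide_right_mono less_eq_real_def)
  with a b have lo: "- (1/(16*u)) \<le> 2 * x * (real m - 2 * real k) - 8 * x\<^sup>2 * real m"
    by simp
  have "exp (- (1/(16*u))) \<le> exp (2 * x * (real m - 2 * real k) - 8 * x\<^sup>2 * real m)"
    using lo by simp
  also have "\<dots> \<le> tilt m k x" using exp_le_tilt x0 x1 k_le_m by simp
  finally show "exp (- (1/(16*u))) \<le> tilt m k (1/(P*B*u))" unfolding x_def .
qed

lemma tilt_tiny:
  assumes x1: "1/P \<le> x" and x2: "x \<le> 1/B"
  shows "tilt m k x \<le> exp (- B)"
proof -
  have "0 < 1/P" "1/B \<le> 1/2" using B_P_pos B_ge by auto
  then have x0: "0 < x" and x4: "x \<le> 1/2" using x1 x2 by linarith+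
  have xP: "1 \<le> x * P" using x1 B_P_pos by (simp add: field_simps)
  show ?thesis
  proof (cases "2 * k \<le> m")
    case True
    have "(1/P) * real k \<le> x * real k" using x1 by (intro mult_right_mono) auto
    moreover have "(1/P) * (B * P\<^sup>2 / 2 - P - s * P) \<le> (1/P) * real k"
      using k_ge_half B_P_pos by (intro mult_left_mono) auto
    moreover have "(1/P) * (B * P\<^sup>2 / 2 - P - s * P) = B * P / 2 - 1 - s"
      using B_P_pos by (simp add: field_simps power2_eq_square)
    ultimately have xk: "B * P - 2 - 2 * s \<le> 2 * x * real k" by linarith
    have "s * P \<le> (B/100) * P" using s_le B_P_pos by (intro mult_right_mono) auto
    then have "s * P \<le> B * P / 100" by simp
    moreover have "9 * P \<le> B * P" using B_ge B_P_pos by (intro mult_right_mono) auto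
    moreover have "B \<le> B * P" using B_P_pos P_ge B_ge by (intro mult_le_cancel_left1[THEN iffD2]) auto
    ultimately have inner: "(real m - 2 * real k) - 2 * x * real k \<le> - (B * P / 2)"
      using drift_le xk B_ge s_le by linarith
    have "tilt m k x \<le> exp (2 * x * (real m - 2 * real k) - 4 * x\<^sup>2 * real k)"
      using tilt_le_exp_few_successes x0 x4 True by simp
    also have "2 * x * (real m - 2 * real k) - 4 * x\<^sup>2 * real k
        = 2 * x * ((real m - 2 * real k) - 2 * x * real k)"
      by (simp add: algebra_simps power2_eq_square)
    also have "\<dots> \<le> 2 * x * (- (B * P / 2))"
      using inner x0 by (intro mult_left_mono) auto
    also have "\<dots> = - B * (x * P)" by (simp add: algebra_simps)
    also have "\<dots> \<le> - B" using xP B_P_pos by (simp add: mult_le_cancel_left1)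
    finally show ?thesis by simp
  next
    case False
    have "B * P * B \<le> B * P\<^sup>2" using B_P_pos P_ge by (simp add: power2_eq_square)
    moreover have "B * P * 1000 \<le> B * P * B" using B_P_pos B_ge by (intro mult_left_mono) auto
    moreover have "1 * 1 \<le> B * P" using P_ge B_ge by (intro mult_mono) auto
    moreover have "real (m - k) = real m - real k" using k_le_m by (simp add: of_nat_diff)
    ultimately have "B * P\<^sup>2 / 4 \<le> real (m - k)" using m_ge k_le by linarith
    then have "4 * x\<^sup>2 * (B * P\<^sup>2 / 4) \<le> 4 * x\<^sup>2 * real (m - k)"
      by (intro mult_left_mono) auto
    moreover have "4 * x\<^sup>2 * (B * P\<^sup>2 / 4) = B * (x * P)\<^sup>2" by (simp add: power_mult_distrib)
    moreover have "B * 1 \<le> B * (x * P)\<^sup>2"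
      using xP B_P_pos by (intro mult_left_mono) (auto simp: one_le_power)
    ultimately have "- 4 * x\<^sup>2 * real (m - k) \<le> - B" by linarith
    moreover have "tilt m k x \<le> exp (- 4 * x\<^sup>2 * real (m - k))"
      using tilt_le_exp_many_successes x0 x4 False k_le_m by simp
    ultimately show ?thesis by (meson exp_le_cancel_iff order_trans)
  qed
qed

end

lemma Dclass_low_levels_le_half:
  assumes "Dclass n B \<rho> L j \<eta> \<mu>" "2 \<le> n"
  shows "measure_pmf.prob \<mu> (level_set B {1..j-1}) \<le> 1/2"
proof (cases "j \<ge> 2")
  case True
  have "2 \<le> n ^ 9" using power_increasing[of 1 9 n] assms(2) by simp
  then have "2 \<le> real n ^ 9" by (metis of_nat_numeral of_nat_le_iff of_nat_power)
  then have "inverse (real n ^ 9) \<le> inverse 2" by (intro le_imp_inverse_le) auto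
  moreover have "level_set B {1..j-1} = {inverse (B ^ l) | l. l \<in> {1..j-1}}"
    unfolding level_set_def by auto
  ultimately show ?thesis using assms(1) True unfolding Dclass_def by simp
qed (simp add: level_set_def)

lemma Dclass_level_le_next_level:
  assumes D: "Dclass n B \<rho> L j \<eta> \<mu>" and j: "1 \<le> j" "j < L"
    and B: "0 < B" and \<rho>: "1 \<le> \<rho>" and \<eta>: "0 \<le> \<eta>" "\<eta> \<le> \<rho> ^ j / 2"
  shows "pmf \<mu> (inverse (B ^ j)) \<le> 3 * B\<^sup>2 * pmf \<mu> (inverse (B ^ (j+1)))"
proof -
  obtain c where c: "c > 0" and cb: "\<forall>l\<in>{j..L}.
        c * inverse (B ^ (2*l)) * (1 - inverse (\<rho> ^ l) * \<eta>) \<le> pmf \<mu> (inverse (B ^ l)) \<and>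
        pmf \<mu> (inverse (B ^ l)) \<le> c * inverse (B ^ (2*l)) * (1 + inverse (\<rho> ^ l) * \<eta>)"
    using D unfolding Dclass_def by blast
  define w where "w = c * inverse (B ^ (2*(j+1)))"
  have w: "0 < w" unfolding w_def using c B by simp
  have cj: "pmf \<mu> (inverse (B ^ j)) \<le> c * inverse (B ^ (2*j)) * (1 + inverse (\<rho> ^ j) * \<eta>)"
    and cj1: "w * (1 - inverse (\<rho> ^ (j+1)) * \<eta>) \<le> pmf \<mu> (inverse (B ^ (j+1)))"
    using cb[rule_format, of j] cb[rule_format, of "j+1"] j unfolding w_def by simp_all
  have "inverse (\<rho> ^ j) * \<eta> \<le> 1/2" using \<rho> \<eta> by (simp add: field_simps)
  have "pmf \<mu> (inverse (B ^ j)) \<le> c * inverse (B ^ (2*j)) * (1 + inverse (\<rho> ^ j) * \<eta>)"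
    by (fact cj)
  also have "c * inverse (B ^ (2*j)) = B\<^sup>2 * w"
    unfolding w_def using B by (simp add: power_add field_simps power2_eq_square)
  also have "B\<^sup>2 * w * (1 + inverse (\<rho> ^ j) * \<eta>) \<le> B\<^sup>2 * w * (3/2)"
    using w \<open>inverse (\<rho> ^ j) * \<eta> \<le> 1/2\<close> by (intro mult_left_mono) auto
  also have "\<dots> = 3 * B\<^sup>2 * (w * (1/2))" by simp
  also have "\<dots> \<le> 3 * B\<^sup>2 * pmf \<mu> (inverse (B ^ (j+1)))"
  proof (rule mult_left_mono)
    have "\<rho> ^ j \<le> \<rho> ^ (j+1)" using \<rho> by (intro power_increasing) auto
    then have "2 * \<eta> \<le> \<rho> ^ (j+1)" using \<eta> by linarith
    then have "inverse (\<rho> ^ (j+1)) * \<eta> \<le> 1/2" using \<rho> by (simp add: field_simps)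
    then have "w * (1/2) \<le> w * (1 - inverse (\<rho> ^ (j+1)) * \<eta>)"
      using w by (intro mult_left_mono) auto
    then show "w * (1/2) \<le> pmf \<mu> (inverse (B ^ (j+1)))" using cj1 by linarith
  qed simp
  finally show ?thesis .
qed

lemma Dclass_upper_levels_mass:
  assumes D: "Dclass n B \<rho> L j \<eta> \<mu>" and j: "1 \<le> j" "j < L" and n: "2 \<le> n"
    and B: "1 \<le> B" and \<rho>: "1 \<le> \<rho>" and \<eta>: "0 \<le> \<eta>" "\<eta> \<le> \<rho> ^ j / 2"
  shows "1 \<le> 8 * B\<^sup>2 * measure_pmf.prob \<mu> (level_set B {j+1..L})"
proof -
  define pT where "pT = measure_pmf.prob \<mu> (level_set B {j+1..L})"
  have "{1..L} = {1..j-1} \<union> {j} \<union> {j+1..L}" using j by auto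
  then have lv: "levels B L = level_set B {1..j-1} \<union> {inverse (B ^ j)} \<union> level_set B {j+1..L}"
    unfolding levels_eq_level_set level_set_def by (simp add: image_Un)
  have "set_pmf \<mu> \<subseteq> levels B L" using D unfolding Dclass_def by blast
  then have "1 = measure_pmf.prob \<mu> (levels B L)"
    by (simp add: measure_pmf.prob_eq_1 AE_measure_pmf_iff subset_eq)
  also have "\<dots> \<le> measure_pmf.prob \<mu> (level_set B {1..j-1} \<union> {inverse (B ^ j)}) + pT"
    unfolding lv pT_def by (rule measure_Un_le) auto
  also have "measure_pmf.prob \<mu> (level_set B {1..j-1} \<union> {inverse (B ^ j)})
      \<le> measure_pmf.prob \<mu> (level_set B {1..j-1}) + pmf \<mu> (inverse (B ^ j))"
    using measure_Un_le[of "level_set B {1..j-1}" "measure_pmf \<mu>" "{inverse (B ^ j)}"]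
    by (simp add: measure_pmf_single)
  finally have total: "1 \<le> measure_pmf.prob \<mu> (level_set B {1..j-1}) + pmf \<mu> (inverse (B ^ j)) + pT"
    by simp
  have "pmf \<mu> (inverse (B ^ (j+1))) \<le> pT"
  proof -
    have "{inverse (B ^ (j+1))} \<subseteq> level_set B {j+1..L}"
      using j unfolding level_set_def by (auto intro!: image_eqI[where x="j+1"])
    then show ?thesis
      unfolding pT_def using measure_pmf.finite_measure_mono[of "{inverse (B ^ (j+1))}"]
      by (simp add: measure_pmf_single)
  qed
  then have "pmf \<mu> (inverse (B ^ j)) \<le> 3 * B\<^sup>2 * pT"
    using Dclass_level_le_next_level[OF D j _ \<rho> \<eta>] B
    by (smt (verit) mult_left_mono zero_le_power2)
  moreover have "pT \<le> B\<^sup>2 * pT"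
    using B unfolding pT_def by (simp add: mult_le_cancel_right1 one_le_power)
  ultimately show ?thesis
    using total Dclass_low_levels_le_half[OF D n] unfolding pT_def by linarith
qed

subsection \<open>Reweighting a distribution of the class D_j\<close>

lemma mult_exp_relative_error:
  fixes w p h \<delta> a E :: real
  assumes w: "0 < w" and \<delta>: "0 \<le> \<delta>" "\<delta> \<le> E/2" and E: "E \<le> 1/2" and a: "0 \<le> a" "a \<le> E/8"
    and p: "w * (1 - \<delta>) \<le> p" "p \<le> w * (1 + \<delta>)" and h: "exp (- a) \<le> h" "h \<le> exp a"
  shows "w * (1 - E) \<le> p * h" "p * h \<le> w * (1 + E)"
proof -
  have "norm (exp a) \<le> 1 + 2 * norm a" using a E by (intro exp_bound_lemma) auto
  then have h_le: "h \<le> 1 + 2 * a" using h a by simp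
  have h_ge: "1 - a \<le> h" using exp_ge_add_one_self[of "- a"] h by simp
  have p0: "0 \<le> w * (1 - \<delta>)" using w \<delta> E by simp
  have "(1 - \<delta>) * (1 - a) = 1 - \<delta> - a + \<delta> * a" by (simp add: algebra_simps)
  then have "1 - E \<le> (1 - \<delta>) * (1 - a)" using \<delta> a mult_nonneg_nonneg[of \<delta> a] by linarith
  then have "w * (1 - E) \<le> w * ((1 - \<delta>) * (1 - a))" using w by (intro mult_left_mono) auto
  also have "\<dots> = (w * (1 - \<delta>)) * (1 - a)" by simp
  also have "\<dots> \<le> p * h" using p p0 h_ge a E by (intro mult_mono) auto
  finally show "w * (1 - E) \<le> p * h" .
  have "a * \<delta> \<le> (E/8) * (1/4)" using a \<delta> E by (intro mult_mono) auto
  then have "(1 + \<delta>) * (1 + 2 * a) \<le> 1 + E" using \<delta> a E by (simp add: algebra_simps)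
  have "p * h \<le> (w * (1 + \<delta>)) * (1 + 2 * a)"
    using p p0 h_le order_trans[OF exp_ge_zero h(1)] by (intro mult_mono) auto
  also have "\<dots> = w * ((1 + \<delta>) * (1 + 2 * a))" by simp
  also have "\<dots> \<le> w * (1 + E)"
    using w \<open>(1 + \<delta>) * (1 + 2 * a) \<le> 1 + E\<close> by (intro mult_left_mono) auto
  finally show "p * h \<le> w * (1 + E)" .
qed

text \<open>
  Since \<rho> \<le> B, the bound on h at a level l > j leaves room for the relative error
  \<rho>^-(l-j-1)/2 of the B^-2l profile required by the class D_(j+1).
\<close>

locale tilted_prior =
  fixes n :: nat and B \<rho> \<eta> Q :: real and L j :: nat and \<mu> \<nu> :: "real pmf" and h :: "real \<Rightarrow> real"
  assumes prior: "Dclass n B \<rho> L j \<eta> \<mu>" and j: "1 \<le> j" "j < L" and n: "2 \<le> n"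
    and B: "1 \<le> B" and \<rho>: "2 \<le> \<rho>" "\<rho> \<le> B" and \<eta>: "0 \<le> \<eta>" "\<eta> \<le> \<rho> ^ j / 2"
    and Q: "0 < Q" and pmf_tilted: "\<And>x. pmf \<nu> x = Q * (pmf \<mu> x * h x)"
    and h_low: "\<And>l. 1 \<le> l \<Longrightarrow> l \<le> j \<Longrightarrow> h (inverse (B ^ l)) \<le> exp (- B)"
    and h_high: "\<And>l. j < l \<Longrightarrow>
      exp (- (1/(16 * B ^ (l-j-1)))) \<le> h (inverse (B ^ l)) \<and> h (inverse (B ^ l)) \<le> exp (1/(16 * B ^ (l-j-1)))"
    and B_large: "16 * B\<^sup>2 * exp (- B) \<le> inverse (real n ^ 9)"
begin

lemma measure_level_set:
  "finite A \<Longrightarrow> measure_pmf.prob \<nu> (level_set B A) = Q * (\<Sum>x\<in>level_set B A. pmf \<mu> x * h x)"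
  unfolding level_set_def by (simp add: measure_measure_pmf_finite pmf_tilted sum_distrib_left)

lemma normalizer_le: "Q \<le> 16 * B\<^sup>2"
proof -
  define pT where "pT = measure_pmf.prob \<mu> (level_set B {j+1..L})"
  have "pT * (1/2) = (\<Sum>x\<in>level_set B {j+1..L}. pmf \<mu> x * (1/2))"
    unfolding pT_def level_set_def by (simp add: measure_measure_pmf_finite sum_distrib_right)
  also have "\<dots> \<le> (\<Sum>x\<in>level_set B {j+1..L}. pmf \<mu> x * h x)"
  proof (rule sum_mono)
    fix x assume "x \<in> level_set B {j+1..L}"
    then obtain l where "l \<in> {j+1..L}" and x: "x = inverse (B ^ l)" unfolding level_set_def by auto
    then have l: "j < l" by simp
    have "1 \<le> B ^ (l-j-1)" using B by (simp add: one_le_power)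
    then have "1/(16 * B ^ (l-j-1)) \<le> 1/16" by (simp add: field_simps)
    moreover have "1 - 1/(16 * B ^ (l-j-1)) \<le> exp (- (1/(16 * B ^ (l-j-1))))"
      using exp_ge_add_one_self[of "- (1/(16 * B ^ (l-j-1)))"] by simp
    ultimately have "1/2 \<le> h x" using h_high[OF l] x by auto
    then show "pmf \<mu> x * (1/2) \<le> pmf \<mu> x * h x" by (intro mult_left_mono) auto
  qed
  finally have "Q * (pT / 2) \<le> measure_pmf.prob \<nu> (level_set B {j+1..L})"
    using Q measure_level_set[of "{j+1..L}"] by (simp add: mult_left_mono)
  also have "\<dots> \<le> 1" by simp
  finally have "Q * pT \<le> 2" by simp
  have "Q \<le> Q * (8 * B\<^sup>2 * pT)"
    using Dclass_upper_levels_mass[OF prior j n B _ \<eta>] \<rho> Q unfolding pT_def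
    by (simp add: mult_le_cancel_left1)
  also have "\<dots> = 8 * B\<^sup>2 * (Q * pT)" by simp
  also have "\<dots> \<le> 8 * B\<^sup>2 * 2" using \<open>Q * pT \<le> 2\<close> by (intro mult_left_mono) auto
  finally show ?thesis by simp
qed

lemma low_levels_mass: "measure_pmf.prob \<nu> (level_set B {1..j}) \<le> inverse (real n ^ 9)"
proof -
  have "(\<Sum>x\<in>level_set B {1..j}. pmf \<mu> x * h x) \<le> (\<Sum>x\<in>level_set B {1..j}. pmf \<mu> x * exp (- B))"
  proof (rule sum_mono)
    fix x assume "x \<in> level_set B {1..j}"
    then obtain l where "l \<in> {1..j}" "x = inverse (B ^ l)" unfolding level_set_def by auto
    then show "pmf \<mu> x * h x \<le> pmf \<mu> x * exp (- B)"
      using h_low[of l] by (intro mult_left_mono) auto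
  qed
  also have "\<dots> = measure_pmf.prob \<mu> (level_set B {1..j}) * exp (- B)"
    unfolding level_set_def by (simp add: measure_measure_pmf_finite sum_distrib_right)
  also have "\<dots> \<le> exp (- B)" by (simp add: mult_left_le_one_le)
  finally have "measure_pmf.prob \<nu> (level_set B {1..j}) \<le> Q * exp (- B)"
    using Q measure_level_set[of "{1..j}"] by (simp add: mult_left_mono)
  also have "\<dots> \<le> 16 * B\<^sup>2 * exp (- B)" using normalizer_le by (intro mult_right_mono) auto
  finally show ?thesis using B_large by linarith
qed

lemma level_weights:
  "\<exists>c>0. \<forall>l\<in>{j+1..L}.
     c * inverse (B ^ (2*l)) * (1 - inverse (\<rho> ^ l) * (\<rho> ^ (j+1) / 2)) \<le> pmf \<nu> (inverse (B ^ l)) \<and>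
     pmf \<nu> (inverse (B ^ l)) \<le> c * inverse (B ^ (2*l)) * (1 + inverse (\<rho> ^ l) * (\<rho> ^ (j+1) / 2))"
proof -
  obtain c where c: "c > 0" and cb: "\<forall>l\<in>{j..L}.
        c * inverse (B ^ (2*l)) * (1 - inverse (\<rho> ^ l) * \<eta>) \<le> pmf \<mu> (inverse (B ^ l)) \<and>
        pmf \<mu> (inverse (B ^ l)) \<le> c * inverse (B ^ (2*l)) * (1 + inverse (\<rho> ^ l) * \<eta>)"
    using prior unfolding Dclass_def by blast
  have "(Q*c) * inverse (B ^ (2*l)) * (1 - inverse (\<rho> ^ l) * (\<rho> ^ (j+1) / 2)) \<le> pmf \<nu> (inverse (B ^ l)) \<and>
     pmf \<nu> (inverse (B ^ l)) \<le> (Q*c) * inverse (B ^ (2*l)) * (1 + inverse (\<rho> ^ l) * (\<rho> ^ (j+1) / 2))"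
    if l: "l \<in> {j+1..L}" for l
  proof -
    define t where "t = l - j - 1"
    define E where "E = 1 / (2 * \<rho> ^ t)"
    have lt: "l = (j + 1) + t" using l unfolding t_def by simp
    have \<rho>t: "1 \<le> \<rho> ^ t" using \<rho> by (simp add: one_le_power)
    have E_eq: "inverse (\<rho> ^ l) * (\<rho> ^ (j+1) / 2) = E"
      unfolding E_def lt power_add using \<rho> by (simp add: field_simps)
    have "inverse (\<rho> ^ l) * \<eta> \<le> inverse (\<rho> ^ l) * (\<rho> ^ j / 2)"
      using \<eta> \<rho> by (intro mult_left_mono) auto
    also have "\<dots> = E / \<rho>" unfolding E_def lt power_add using \<rho> by (simp add: field_simps)
    also have "\<dots> \<le> E / 2" unfolding E_def using \<rho> by (simp add: frac_le)
    finally have \<delta>: "inverse (\<rho> ^ l) * \<eta> \<le> E / 2" .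
    have "\<rho> ^ t \<le> B ^ t" using \<rho> by (intro power_mono) auto
    then have a: "1 / (16 * B ^ t) \<le> E / 8" unfolding E_def using \<rho>t by (simp add: field_simps)
    have "c * inverse (B ^ (2*l)) * (1 - E) \<le> pmf \<mu> (inverse (B ^ l)) * h (inverse (B ^ l)) \<and>
        pmf \<mu> (inverse (B ^ l)) * h (inverse (B ^ l)) \<le> c * inverse (B ^ (2*l)) * (1 + E)"
      using mult_exp_relative_error[of "c * inverse (B ^ (2*l))" "inverse (\<rho> ^ l) * \<eta>" E
          "1 / (16 * B ^ t)" "pmf \<mu> (inverse (B ^ l))" "h (inverse (B ^ l))"]
        c B \<eta> \<rho> \<delta> a \<rho>t cb[rule_format, of l] h_high[of l] l
      unfolding E_def t_def by (auto simp: field_simps)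
    then show ?thesis
      unfolding E_eq pmf_tilted using Q by (auto simp: mult.assoc intro: mult_left_mono)
  qed
  then show ?thesis using Q c by (intro exI[of _ "Q*c"]) auto
qed

lemma Dclass_posterior: "Dclass n B \<rho> L (j+1) (\<rho> ^ (j+1) / 2) \<nu>"
  unfolding Dclass_def
proof (intro conjI impI level_weights)
  show "set_pmf \<nu> \<subseteq> levels B L"
    using prior unfolding Dclass_def by (auto simp: set_pmf_iff pmf_tilted)
  have "{inverse (B ^ l) | l. l \<in> {1..j+1-1}} = level_set B {1..j}"
    unfolding level_set_def by auto
  then show "measure_pmf.prob \<nu> {inverse (B ^ l) | l. l \<in> {1..j+1-1}} \<le> inverse (real n ^ 9)"
    using low_levels_mass by simp
qed

end

lemma numPulls_window:
  fixes B :: real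
  assumes Ln: "4 \<le> ln (real n)" and B: "262144 * ln (real n) \<le> B" and j: "1 \<le> j"
    and z1: "zeta1 n B B j \<le> real (card {i. i < numPulls B B j \<and> \<theta> i})"
    and z3: "real (card {i. i < numPulls B B j \<and> \<theta> i}) \<le> zeta3 B B j"
  shows "pull_window B (B ^ j) (sqrt (10 * B * ln (real n))) (numPulls B B j)
           (card {i. i < numPulls B B j \<and> \<theta> i})"
proof
  define P where "P = B ^ j"
  have B0: "1000 \<le> B" using Ln B by linarith
  show "1000 \<le> B" by (fact B0)
  show "B \<le> B ^ j" using power_increasing[of 1 j B] j B0 by simp
  show "0 \<le> sqrt (10 * B * ln (real n))" using Ln B0 by simp
  have "10 * B * ln (real n) \<le> (B/100)\<^sup>2"
    using B B0 mult_left_mono[of "10 * ln (real n)" "B/10000" B] by (simp add: power2_eq_square)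
  then show "sqrt (10 * B * ln (real n)) \<le> B/100"
    using B0 real_sqrt_le_mono[of "10 * B * ln (real n)" "(B/100)\<^sup>2"] by simp
  have P2: "B ^ (2*j) = P\<^sup>2" unfolding P_def by (simp add: power_mult[symmetric] mult.commute)
  have "0 \<le> B * P\<^sup>2" using B0 by simp
  then show "real (numPulls B B j) \<le> B * (B ^ j)\<^sup>2" "B * (B ^ j)\<^sup>2 - 1 \<le> real (numPulls B B j)"
    unfolding numPulls_def P2 P_def[symmetric] by linarith+
  show "card {i. i < numPulls B B j \<and> \<theta> i} \<le> numPulls B B j"
    using card_mono[of "{..<numPulls B B j}" "{i. i < numPulls B B j \<and> \<theta> i}"] by auto
  have "zeta1 n B B j = (1/2 - 1/(B * P)) * B * P\<^sup>2 - sqrt (10 * B * ln (real n)) * P"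
    unfolding zeta1_def P2 P_def by (simp add: inverse_eq_divide)
  then show "(1/2 - 1/(B * B ^ j)) * B * (B ^ j)\<^sup>2 - sqrt (10 * B * ln (real n)) * B ^ j
      \<le> real (card {i. i < numPulls B B j \<and> \<theta> i})"
    using z1 unfolding P_def by simp
  show "real (card {i. i < numPulls B B j \<and> \<theta> i}) \<le> B * (B ^ j)\<^sup>2 / 2 + B * B ^ j / 100"
    using z3 unfolding zeta3_def P2[unfolded P_def] by simp
qed

lemma square_mul_exp_neg_le:
  fixes B Ln :: real
  assumes "3456 \<le> B" "18 * Ln \<le> B"
  shows "16 * B\<^sup>2 * exp (- B) \<le> exp (- 9 * Ln)"
proof -
  have "B/6 \<le> exp (B/6)" using exp_ge_add_one_self[of "B/6"] by linarith
  then have "(B/6)^3 \<le> exp (B/6) ^ 3" using assms by (intro power_mono) auto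
  also have "\<dots> = exp (B/2)" by (simp add: exp_of_nat_mult[symmetric])
  finally have e: "(B/6)^3 \<le> exp (B/2)" .
  have "(16 * 216) * B\<^sup>2 \<le> B * B\<^sup>2" using assms by (intro mult_right_mono) auto
  then have "16 * B\<^sup>2 \<le> (B/6)^3" by (simp add: power_divide power3_eq_cube power2_eq_square)
  with e have "16 * B\<^sup>2 * exp (- B) \<le> exp (B/2) * exp (- B)" by (intro mult_right_mono) auto
  also have "\<dots> = exp (- (B/2))" by (simp add: exp_add[symmetric])
  also have "\<dots> \<le> exp (- 9 * Ln)" using assms by simp
  finally show ?thesis .
qed

lemma large_n_parameters:
  assumes Ln: "4 \<le> ln (real n)" and B: "ln (real n) ^ 10 \<le> B"
  shows "262144 * ln (real n) \<le> B" "2 \<le> ln (real n) ^ 3" "ln (real n) ^ 3 \<le> B" "2 \<le> n"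
    "16 * B\<^sup>2 * exp (- B) \<le> inverse (real n ^ 9)"
proof -
  define Ln where "Ln = ln (real n)"
  have "4 ^ 9 * Ln \<le> Ln ^ 9 * Ln" using Ln unfolding Ln_def by (intro mult_right_mono power_mono) auto
  moreover have "Ln ^ 9 * Ln = Ln ^ 10" by (simp add: eval_nat_numeral)
  ultimately show BLn: "262144 * ln (real n) \<le> B" using B unfolding Ln_def by simp
  have "4 ^ 3 \<le> ln (real n) ^ 3" "ln (real n) ^ 3 \<le> ln (real n) ^ 10"
    using Ln by (intro power_mono power_increasing; simp)+
  then show "2 \<le> ln (real n) ^ 3" "ln (real n) ^ 3 \<le> B" using B by auto
  have n_pos: "0 < real n" using Ln by (cases n) auto
  have "exp 1 \<le> real n" using Ln exp_le_cancel_iff[of 1 "ln (real n)"] n_pos by simp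
  then show "2 \<le> n" using exp_ge_add_one_self[of 1] by linarith
  have "exp (9 * Ln) = real n ^ 9" using exp_of_nat_mult[of 9 Ln] n_pos unfolding Ln_def by simp
  then have "exp (- 9 * Ln) = inverse (real n ^ 9)" by (metis exp_minus mult_minus_left)
  then show "16 * B\<^sup>2 * exp (- B) \<le> inverse (real n ^ 9)"
    using square_mul_exp_neg_le[of B Ln] BLn Ln unfolding Ln_def by simp
qed

lemma Dcls_posterior:
  assumes Ln: "4 \<le> ln (real n)" and B: "ln (real n) ^ 10 \<le> B" and \<rho>: "\<rho> = ln (real n) ^ 3"
    and j: "1 \<le> j" "j < L" and prior: "Dcls n B \<rho> L j \<mu>" and \<theta>: "\<forall>i\<ge>numPulls B B j. \<not> \<theta> i"
    and z1: "zeta1 n B B j \<le> real (card {i. i < numPulls B B j \<and> \<theta> i})"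
    and z3: "real (card {i. i < numPulls B B j \<and> \<theta> i}) \<le> zeta3 B B j"
  shows "Dcls n B \<rho> L (j+1) (posterior \<mu> (numPulls B B j) \<theta>)"
proof -
  define Ln where "Ln = ln (real n)"
  define m where "m = numPulls B B j"
  define k where "k = card {i. i < m \<and> \<theta> i}"
  note params = large_n_parameters[OF Ln B, folded Ln_def]
  have \<rho>_bounds: "2 \<le> \<rho>" "\<rho> \<le> B" using params \<rho> unfolding Ln_def by auto
  interpret pull_window B "B ^ j" "sqrt (10 * B * Ln)" m k
    unfolding m_def k_def Ln_def using numPulls_window[OF Ln params(1)[unfolded Ln_def] j(1) z1 z3] .
  have "set_pmf \<mu> \<subseteq> levels B L" using prior unfolding Dcls_def Dclass_def by blast
  then have "\<forall>x\<in>set_pmf \<mu>. 0 < x \<and> x < 1/2" using levels_bounds[of B] B_ge by force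
  then obtain Q where Q: "0 < Q" and pmf_post: "\<And>x. pmf (posterior \<mu> m \<theta>) x = Q * (pmf \<mu> x * tilt m k x)"
    using posterior_eq_tilt \<theta> unfolding m_def k_def by blast
  interpret tilted_prior n B \<rho> "if j = 1 then 0 else \<rho> ^ j / 2" Q L j \<mu> "posterior \<mu> m \<theta>" "tilt m k"
  proof
    show "Dclass n B \<rho> L j (if j = 1 then 0 else \<rho> ^ j / 2) \<mu>" using prior by (simp add: Dcls_def)
    show "0 \<le> (if j = 1 then 0 else \<rho> ^ j / 2)" "(if j = 1 then 0 else \<rho> ^ j / 2) \<le> \<rho> ^ j / 2"
      using \<rho>_bounds by simp_all
    show "1 \<le> B" using B_ge by simp
  next
    fix l assume l: "1 \<le> l" "l \<le> j"
    have "B ^ 1 \<le> B ^ l" "B ^ l \<le> B ^ j" using l B_ge by (intro power_increasing; simp)+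
    then show "tilt m k (inverse (B ^ l)) \<le> exp (- B)"
      using B_ge by (intro tilt_tiny) (simp_all add: inverse_eq_divide frac_le)
  next
    fix l assume "j < l"
    then have "B ^ l = B ^ (j + 1 + (l-j-1))" by simp
    then have "inverse (B ^ l) = 1 / (B ^ j * B * B ^ (l-j-1))"
      by (simp add: inverse_eq_divide power_add mult.commute)
    moreover have "1 \<le> B ^ (l-j-1)" using B_ge by (simp add: one_le_power)
    ultimately show "exp (- (1/(16 * B ^ (l-j-1)))) \<le> tilt m k (inverse (B ^ l)) \<and>
        tilt m k (inverse (B ^ l)) \<le> exp (1/(16 * B ^ (l-j-1)))"
      using tilt_near_one[of "B ^ (l-j-1)"] by simp
  qed (fact j params(4,5) \<rho>_bounds Q pmf_post)+
  show ?thesis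
    using Dclass_posterior j unfolding Dcls_def m_def by simp
qed

theorem mainTheorem2:
  shows "\<exists>N::nat. \<forall>n\<ge>N. \<forall>\<alpha>::real. 1 \<le> \<alpha> \<and> \<alpha> \<le> real n powr 0.2 \<longrightarrow>
    (\<forall>B \<gamma> \<rho>. B = \<alpha> * (ln (real n)) ^ 10 \<and> \<gamma> = B \<and> \<rho> = (ln (real n)) ^ 3 \<longrightarrow>
    (\<forall>(L::nat) (j::nat) (\<mu>::real pmf) (\<theta>::nat \<Rightarrow> bool).
       2 \<le> L \<and> 1 \<le> j \<and> j \<le> L - 1 \<and> Dcls n B \<rho> L j \<mu> \<and>
       (\<forall>i\<ge>numPulls \<gamma> B j. \<not> \<theta> i) \<and>
       zeta1 n \<gamma> B j \<le> real (card {i. i < numPulls \<gamma> B j \<and> \<theta> i}) \<and>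
       real (card {i. i < numPulls \<gamma> B j \<and> \<theta> i}) \<le> zeta3 \<gamma> B j
       \<longrightarrow> Dcls n B \<rho> L (j+1) (posterior \<mu> (numPulls \<gamma> B j) \<theta>)))"
proof (intro exI[of _ "nat \<lceil>exp (4::real)\<rceil>"] allI impI)
  fix n :: nat and \<alpha> B \<gamma> \<rho> :: real and L j :: nat and \<mu> :: "real pmf" and \<theta> :: "nat \<Rightarrow> bool"
  assume n: "nat \<lceil>exp (4::real)\<rceil> \<le> n" and \<alpha>: "1 \<le> \<alpha> \<and> \<alpha> \<le> real n powr 0.2"
    and B: "B = \<alpha> * (ln (real n)) ^ 10 \<and> \<gamma> = B \<and> \<rho> = (ln (real n)) ^ 3"
    and H: "2 \<le> L \<and> 1 \<le> j \<and> j \<le> L - 1 \<and> Dcls n B \<rho> L j \<mu> \<and>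
       (\<forall>i\<ge>numPulls \<gamma> B j. \<not> \<theta> i) \<and>
       zeta1 n \<gamma> B j \<le> real (card {i. i < numPulls \<gamma> B j \<and> \<theta> i}) \<and>
       real (card {i. i < numPulls \<gamma> B j \<and> \<theta> i}) \<le> zeta3 \<gamma> B j"
  have "exp 4 \<le> real n"
    using n le_of_int_ceiling[of "exp (4::real)"] by linarith
  then have Ln: "4 \<le> ln (real n)"
    by (metis exp_gt_zero exp_le_cancel_iff exp_ln less_le_trans)
  then have "ln (real n) ^ 10 \<le> B" using \<alpha> B by (simp add: mult_le_cancel_right1)
  then show "Dcls n B \<rho> L (j+1) (posterior \<mu> (numPulls \<gamma> B j) \<theta>)"
    using Dcls_posterior[OF Ln, of B \<rho> j L \<mu> \<theta>] B H by auto
qed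

end
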